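(* For integers $d,k\ge0$ let $E'_k(d)=\sum_{i=0}^k\binom{k}{i}E_i(d)(-\tfrac d2)^{k-i}$. Then: (1) for all integers $a,b,k\ge0$, $E'_k(a+b+2)=\sum_{i+j=k}\binom{k}{i}E'_i(a)E'_j(b)$; (2) $\displaystyle\sum_{k\ge0}E'_k(d)\frac{z^k}{k!}=\Bigg(\sum_{t\ge0}\frac{z^{2t}}{4^t(2t+1)!}\Bigg)^{d+2}$; (3) when $d\ge k-1$, $E'_k(d)=\mathbb{E}\big[(\mathcal{X}_d-\tfrac d2)^k\big]$.
   Context: $\mathcal{X}_d$ is the number of descents of a uniformly random permutation of $\{1,\dots,d+1\}$. For each $k\ge0$, $E_k(d)\in\mathbb{Q}[d]$ is the polynomial of degree $k$ determined by $\sum_{k\ge0}\frac{E_k(d)}{k!}z^k=\big(\frac{e^z-1}{z}\big)^{d+2}e^{-z}$; it satisfies $E_k(d)=\mathbb{E}[\mathcal{X}_d^k]$ for all integers $d\ge\max(k-1,0)$. *)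

theory Defs
  imports "HOL-Probability.Probability" "HOL-Computational_Algebra.Formal_Power_Series"
begin

text \<open>The formal power series (e^z - 1)/z = sum_n z^n/(n+1)!.\<close>
definition expm1_div :: "real fps" where
  "expm1_div = Abs_fps (\<lambda>n. 1 / fact (Suc n))"

definition E :: "nat \<Rightarrow> nat \<Rightarrow> real" where
  "E k d = fact k * fps_nth (expm1_div ^ (d + 2) * fps_exp (-1)) k"

definition E' :: "nat \<Rightarrow> nat \<Rightarrow> real" where
  "E' k d = (\<Sum>i=0..k. real (k choose i) * E i d * (- real d / 2) ^ (k - i))"

definition descents :: "nat \<Rightarrow> (nat \<Rightarrow> nat) \<Rightarrow> nat" where
  "descents n \<sigma> = card {i \<in> {1..<n}. \<sigma> (Suc i) < \<sigma> i}"

definition unif_perm :: "nat \<Rightarrow> (nat \<Rightarrow> nat) pmf" where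
  "unif_perm n = pmf_of_set {\<sigma>. \<sigma> permutes {1..n}}"

end

theory Submission
  imports Defs "HOL-Combinatorics.Multiset_Permutations"
begin

(* Inserting the letter n + 1 into a permutation of {1..n} with D descents leaves the number of
   descents unchanged at D + 1 of the n + 1 possible positions and raises it by one at the other
   n - D.  Hence the power sums of the descent numbers over all permutations of {1..n} obey a
   linear recurrence in n.  Differentiating g^(d+2) e^(-z), where g = (e^z - 1)/z, shows that
   (d+1)! E_k(d) satisfies the same recurrence.  The two agree for k <= d + 1 because the k-th
   power sum enters the recurrence with the factor 1 + n - k, which vanishes at the first order
   not yet covered by the induction on d.
   Centring at d/2 multiplies the exponential generating function by e^(-dz/2), and
   g e^(-z/2) = S := sinh(z/2)/(z/2); this is (2), and (1) is the coefficientwise form of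
   S^(a+b+4) = S^(a+2) S^(b+2). *)

definition descent_set :: "'a::linorder list \<Rightarrow> nat set" where
  "descent_set xs = {i. Suc i < length xs \<and> xs ! Suc i < xs ! i}"

definition num_descents :: "'a::linorder list \<Rightarrow> nat" where
  "num_descents xs = card (descent_set xs)"

lemma descent_set_subset: "descent_set xs \<subseteq> {..<length xs - 1}"
  by (auto simp: descent_set_def)

lemma finite_descent_set [simp]: "finite (descent_set xs)"
  using descent_set_subset finite_subset by blast

lemma num_descents_le_length: "num_descents xs \<le> length xs"
  unfolding num_descents_def using card_mono[OF finite_lessThan descent_set_subset[of xs]] by simp

lemma num_descents_Nil [simp]: "num_descents [] = 0"
  and num_descents_singleton [simp]: "num_descents [x] = 0"
  by (simp_all add: num_descents_def descent_set_def)

lemma num_descents_Cons_Cons: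
  "num_descents (x # y # zs) = (if y < x then 1 else 0) + num_descents (y # zs)"
proof -
  have "descent_set (x # y # zs) = (if y < x then {0} else {}) \<union> Suc ` descent_set (y # zs)"
    by (auto simp: descent_set_def less_Suc_eq_0_disj)
  then show ?thesis
    by (simp add: num_descents_def card_image card_insert_if)
qed

lemma num_descents_append:
  "num_descents (xs @ ys) =
     num_descents xs + num_descents ys + (if xs \<noteq> [] \<and> ys \<noteq> [] \<and> hd ys < last xs then 1 else 0)"
proof (induction xs rule: induct_list012)
  case (3 x y zs)
  then show ?case by (simp add: num_descents_Cons_Cons)
next
  case (2 x)
  then show ?case by (cases ys) (auto simp: num_descents_Cons_Cons)
qed simp

(* Position p is the gap before xs ! p; inserting the maximum there creates no new descent
   exactly at the end of the list and inside an existing descent. *)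
lemma num_descents_insert_max:
  assumes "\<forall>x\<in>set xs. x < m" and "p \<le> length xs"
  shows "num_descents (take p xs @ m # drop p xs) =
    num_descents xs + (if p \<in> insert (length xs) (Suc ` descent_set xs) then 0 else 1)"
proof -
  let ?A = "take p xs" and ?B = "drop p xs"
  have A_below: "\<not> (?A \<noteq> [] \<and> m < last ?A)"
    using assms(1) last_in_set[of ?A] in_set_takeD[of "last ?A" p xs] by force
  have "\<forall>x\<in>set ?B. x < m"
    using assms(1) by (auto dest: in_set_dropD)
  then have "num_descents (m # ?B) = (if ?B = [] then 0 else 1) + num_descents ?B"
    by (cases ?B) (auto simp: num_descents_Cons_Cons)
  with A_below have ins:
    "num_descents (?A @ m # ?B) = num_descents ?A + (if ?B = [] then 0 else 1) + num_descents ?B"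
    by (simp add: num_descents_append)
  have split: "num_descents xs = num_descents ?A + num_descents ?B
      + (if ?A \<noteq> [] \<and> ?B \<noteq> [] \<and> hd ?B < last ?A then 1 else 0)"
    using num_descents_append[of ?A ?B] by simp
  have "p \<in> Suc ` descent_set xs \<longleftrightarrow> ?A \<noteq> [] \<and> ?B \<noteq> [] \<and> hd ?B < last ?A"
  proof (cases "0 < p \<and> p < length xs")
    case True
    then have "hd ?B = xs ! p" "last ?A = xs ! (p - 1)"
      by (simp add: hd_drop_conv_nth, subst last_conv_nth) (auto simp: min_def)
    with True show ?thesis
      by (auto simp: descent_set_def image_iff gr0_conv_Suc)
  qed (use assms(2) in \<open>auto simp: descent_set_def\<close>)
  then show ?thesis
    using ins split assms(2) by auto
qed

lemma sum_num_descents_insert_max: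
  fixes f :: "nat \<Rightarrow> 'b::comm_semiring_1"
  assumes "\<forall>x\<in>set xs. x < m"
  shows "(\<Sum>p\<in>{0..length xs}. f (num_descents (take p xs @ m # drop p xs))) =
    of_nat (num_descents xs + 1) * f (num_descents xs)
    + of_nat (length xs - num_descents xs) * f (num_descents xs + 1)"
proof -
  define P where "P = insert (length xs) (Suc ` descent_set xs)"
  have P_subset: "P \<subseteq> {0..length xs}"
    using descent_set_subset by (force simp: P_def)
  have card_P: "card P = num_descents xs + 1"
    using descent_set_subset by (force simp: P_def num_descents_def card_image card_insert_if)
  have "(\<Sum>p\<in>{0..length xs}. f (num_descents (take p xs @ m # drop p xs))) =
      (\<Sum>p\<in>P. f (num_descents xs)) + (\<Sum>p\<in>{0..length xs} - P. f (num_descents xs + 1))"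
    using P_subset assms
    by (simp add: sum.subset_diff[OF P_subset] num_descents_insert_max P_def add.commute)
  also have "\<dots> = of_nat (num_descents xs + 1) * f (num_descents xs)
      + of_nat (length xs - num_descents xs) * f (num_descents xs + 1)"
    using P_subset by (simp add: card_P card_Diff_subset finite_subset)
  finally show ?thesis .
qed

lemma bij_betw_insert_permutations_of_set:
  assumes "finite A" and "m \<notin> A"
  shows "bij_betw (\<lambda>(xs, p). take p xs @ m # drop p xs)
           (permutations_of_set A \<times> {0..card A}) (permutations_of_set (insert m A))"
proof -
  let ?ins = "\<lambda>(xs, p). take p xs @ m # drop p xs"
  have inj: "inj_on ?ins (permutations_of_set A \<times> {0..card A})"
  proof (rule inj_onI, clarsimp)
    fix xs p ys q
    assume xs: "xs \<in> permutations_of_set A" and ys: "ys \<in> permutations_of_set A"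
      and "p \<le> card A" "q \<le> card A"
      and eq: "take p xs @ m # drop p xs = take q ys @ m # drop q ys"
    have "m \<notin> set (take p xs)" "m \<notin> set (drop p xs)"
      using xs assms(2) by (auto dest: in_set_takeD in_set_dropD permutations_of_setD)
    then have "take p xs = take q ys \<and> drop p xs = drop q ys"
      using eq by (simp add: append_Cons_eq_iff)
    moreover have "length xs = card A" "length ys = card A"
      using xs ys by (simp_all add: length_finite_permutations_of_set)
    ultimately show "xs = ys \<and> p = q"
      using \<open>p \<le> card A\<close> \<open>q \<le> card A\<close> by (metis append_take_drop_id length_take min.absorb2)
  qed
  have "?ins ` (permutations_of_set A \<times> {0..card A}) \<subseteq> permutations_of_set (insert m A)"
  proof clarsimp
    fix xs p
    assume "xs \<in> permutations_of_set A"
    then have "set xs = A" "distinct xs"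
      by (auto dest: permutations_of_setD)
    then show "take p xs @ m # drop p xs \<in> permutations_of_set (insert m A)"
      using assms(2) distinct_append[of "take p xs" "drop p xs"] set_append[of "take p xs" "drop p xs"]
      by (intro permutations_of_setI) auto
  qed
  moreover have "card (permutations_of_set (insert m A)) = card (permutations_of_set A \<times> {0..card A})"
    using assms by (simp add: card_cartesian_product)
  ultimately show ?thesis
    using inj by (simp add: bij_betw_def card_image card_subset_eq)
qed

lemma sum_permutations_of_set_insert_max:
  fixes f :: "nat \<Rightarrow> 'b::comm_semiring_1"
  assumes "finite A" and "\<forall>x\<in>A. x < m"
  shows "(\<Sum>zs\<in>permutations_of_set (insert m A). f (num_descents zs)) =
    (\<Sum>xs\<in>permutations_of_set A. of_nat (num_descents xs + 1) * f (num_descents xs)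
        + of_nat (card A - num_descents xs) * f (num_descents xs + 1))"
proof -
  have "(\<Sum>zs\<in>permutations_of_set (insert m A). f (num_descents zs)) =
      (\<Sum>(xs, p)\<in>permutations_of_set A \<times> {0..card A}.
         f (num_descents (take p xs @ m # drop p xs)))"
    using bij_betw_insert_permutations_of_set[OF assms(1)] assms(2)
    by (subst sum.reindex_bij_betw[symmetric]) (auto simp: case_prod_unfold)
  also have "\<dots> = (\<Sum>xs\<in>permutations_of_set A.
      \<Sum>p\<in>{0..length xs}. f (num_descents (take p xs @ m # drop p xs)))"
    by (simp add: sum.cartesian_product length_finite_permutations_of_set)
  also have "\<dots> = (\<Sum>xs\<in>permutations_of_set A. of_nat (num_descents xs + 1) * f (num_descents xs)
        + of_nat (card A - num_descents xs) * f (num_descents xs + 1))"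
  proof (intro sum.cong refl)
    fix xs assume xs: "xs \<in> permutations_of_set A"
    then have "\<forall>x\<in>set xs. x < m"
      using assms(2) by (simp add: permutations_of_setD)
    from sum_num_descents_insert_max[OF this, of f]
    show "(\<Sum>p\<in>{0..length xs}. f (num_descents (take p xs @ m # drop p xs))) =
        of_nat (num_descents xs + 1) * f (num_descents xs)
        + of_nat (card A - num_descents xs) * f (num_descents xs + 1)"
      by (simp add: length_finite_permutations_of_set[OF xs])
  qed
  finally show ?thesis .
qed

lemma bij_betw_permutes_permutations_of_set:
  assumes "distinct xs"
  shows "bij_betw (\<lambda>\<sigma>. map \<sigma> xs) {\<sigma>. \<sigma> permutes set xs} (permutations_of_set (set xs))"
proof -
  have inj: "inj_on (\<lambda>\<sigma>. map \<sigma> xs) {\<sigma>. \<sigma> permutes set xs}"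
  proof (rule inj_onI, rule ext)
    fix \<sigma> \<tau> x
    assume "\<sigma> \<in> {\<sigma>. \<sigma> permutes set xs}" "\<tau> \<in> {\<sigma>. \<sigma> permutes set xs}"
      and "map \<sigma> xs = map \<tau> xs"
    then show "\<sigma> x = \<tau> x"
      by (cases "x \<in> set xs") (auto simp: permutes_not_in)
  qed
  have "(\<lambda>\<sigma>. map \<sigma> xs) ` {\<sigma>. \<sigma> permutes set xs} \<subseteq> permutations_of_set (set xs)"
    using assms by (auto simp: permutes_image distinct_map permutes_inj_on)
  moreover have "card (permutations_of_set (set xs)) = card {\<sigma>. \<sigma> permutes set xs}"
    by (simp add: card_permutations)
  ultimately show ?thesis
    using inj by (simp add: bij_betw_def card_image card_subset_eq)
qed

lemma descents_eq_num_descents: "descents n \<sigma> = num_descents (map \<sigma> [1..<Suc n])"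
proof -
  have "descent_set (map \<sigma> [1..<Suc n]) = {j. Suc j < n \<and> \<sigma> (Suc (Suc j)) < \<sigma> (Suc j)}"
    by (auto simp: descent_set_def simp del: upt_Suc)
  moreover have "{i \<in> {1..<n}. \<sigma> (Suc i) < \<sigma> i} = Suc ` \<dots>"
    by (auto simp: image_iff Suc_le_eq gr0_conv_Suc)
  ultimately show ?thesis
    by (simp add: descents_def num_descents_def card_image del: upt_Suc)
qed

lemma expectation_unif_perm_descents:
  fixes g :: "nat \<Rightarrow> real"
  shows "measure_pmf.expectation (unif_perm n) (\<lambda>\<sigma>. g (descents n \<sigma>)) =
    (\<Sum>xs\<in>permutations_of_set {1..n}. g (num_descents xs)) / fact n"
proof -
  have perms: "finite {\<sigma>. \<sigma> permutes {1..n}}" "{\<sigma>. \<sigma> permutes {1..n}} \<noteq> {}"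
    "card {\<sigma>. \<sigma> permutes {1..n}} = fact n"
    by (auto intro: finite_permutations permutes_id card_permutations)
  have "bij_betw (\<lambda>\<sigma>. map \<sigma> [1..<Suc n]) {\<sigma>. \<sigma> permutes {1..n}} (permutations_of_set {1..n})"
    using bij_betw_permutes_permutations_of_set[of "[1..<Suc n]"]
    by (simp add: atLeastLessThanSuc_atLeastAtMost del: upt_Suc)
  from sum.reindex_bij_betw[OF this, of "\<lambda>xs. g (num_descents xs)"]
  have "(\<Sum>\<sigma> | \<sigma> permutes {1..n}. g (descents n \<sigma>)) =
      (\<Sum>xs\<in>permutations_of_set {1..n}. g (num_descents xs))"
    by (simp add: descents_eq_num_descents del: upt_Suc)
  then show ?thesis
    using perms by (simp add: unif_perm_def integral_pmf_of_set)
qed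

definition moment_step :: "(nat \<Rightarrow> 'a::comm_ring_1) \<Rightarrow> nat \<Rightarrow> 'a \<Rightarrow> 'a" where
  "moment_step u k c = u (Suc k) + u k + c * (\<Sum>i=0..k. of_nat (k choose i) * u i)
      - (\<Sum>i=0..k. of_nat (k choose i) * u (Suc i))"

lemma sum_moment_step:
  fixes h :: "'b \<Rightarrow> 'a::comm_ring_1"
  shows "(\<Sum>x\<in>X. (h x + 1) * h x ^ k + (c - h x) * (h x + 1) ^ k) =
    moment_step (\<lambda>i. \<Sum>x\<in>X. h x ^ i) k c"
proof -
  have binomial: "(y + 1) ^ k = (\<Sum>i=0..k. of_nat (k choose i) * y ^ i)" for y :: 'a
    by (simp add: binomial_ring atLeast0AtMost)
  have "(y + 1) * y ^ k + (c - y) * (y + 1) ^ k =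
      y ^ Suc k + y ^ k + c * (\<Sum>i=0..k. of_nat (k choose i) * y ^ i)
      - (\<Sum>i=0..k. of_nat (k choose i) * y ^ Suc i)" for y :: 'a
  proof -
    have "(c - y) * (y + 1) ^ k = c * (y + 1) ^ k - y * (y + 1) ^ k"
      by (simp add: left_diff_distrib)
    moreover have "y * (\<Sum>i=0..k. of_nat (k choose i) * y ^ i) =
        (\<Sum>i=0..k. of_nat (k choose i) * y ^ Suc i)"
      by (simp add: sum_distrib_left mult.left_commute)
    ultimately show ?thesis
      by (simp add: binomial distrib_right)
  qed
  then show ?thesis
    by (simp add: moment_step_def sum.distrib sum_subtractf sum_distrib_left sum.swap[of _ "{0..k}"])
qed

lemma moment_step_scale: "moment_step (\<lambda>i. a * u i) k c = a * moment_step u k c"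
  by (simp add: moment_step_def sum_distrib_left algebra_simps)

lemma moment_step_cong:
  assumes "\<forall>i<k. u i = v i" and "u k = v k \<or> c = of_nat k - 1"
  shows "moment_step u k c = moment_step v k c"
proof -
  define w where "w i = u i - v i" for i
  have w_low: "w i = 0" if "i < k" for i
    using assms(1) that by (simp add: w_def)
  have sum_w: "(\<Sum>i=0..k. of_nat (k choose i) * w i) = w k"
    using w_low by (simp add: sum.last_plus)
  have sum_w_Suc: "(\<Sum>i=0..k. of_nat (k choose i) * w (Suc i)) = of_nat k * w k + w (Suc k)"
  proof (cases k)
    case (Suc j)
    then have "(\<Sum>i=0..<j. of_nat (k choose i) * w (Suc i)) = 0"
      using w_low by (intro sum.neutral) auto
    with Suc show ?thesis
      by (simp add: sum.last_plus atLeastLessThanSuc)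
  qed simp
  have "moment_step u k c - moment_step v k c = w (Suc k) + w k
      + c * (\<Sum>i=0..k. of_nat (k choose i) * w i) - (\<Sum>i=0..k. of_nat (k choose i) * w (Suc i))"
    by (simp add: moment_step_def w_def sum_subtractf right_diff_distrib)
  also have "\<dots> = (1 + c - of_nat k) * w k"
    unfolding sum_w sum_w_Suc by (simp add: algebra_simps)
  finally show ?thesis
    using assms(2) by (auto simp: w_def)
qed

definition descent_moment :: "nat \<Rightarrow> nat \<Rightarrow> real" where
  "descent_moment n k = (\<Sum>xs\<in>permutations_of_set {1..n}. real (num_descents xs) ^ k)"

lemma descent_moment_Suc: "descent_moment (Suc n) k = moment_step (descent_moment n) k (real n)"
proof -
  have "descent_moment (Suc n) k =
      (\<Sum>xs\<in>permutations_of_set {1..n}. real (num_descents xs + 1) * real (num_descents xs) ^ k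
          + real (n - num_descents xs) * real (num_descents xs + 1) ^ k)"
    using sum_permutations_of_set_insert_max[of "{1..n}" "Suc n" "\<lambda>j. real j ^ k"]
    by (simp add: descent_moment_def atLeastAtMostSuc_conv)
  also have "\<dots> = (\<Sum>xs\<in>permutations_of_set {1..n}.
          (real (num_descents xs) + 1) * real (num_descents xs) ^ k
          + (real n - real (num_descents xs)) * (real (num_descents xs) + 1) ^ k)"
  proof (intro sum.cong refl)
    fix xs assume "xs \<in> permutations_of_set {1..n}"
    then have "num_descents xs \<le> n"
      using num_descents_le_length length_finite_permutations_of_set by fastforce
    then show "real (num_descents xs + 1) * real (num_descents xs) ^ k
          + real (n - num_descents xs) * real (num_descents xs + 1) ^ k =
        (real (num_descents xs) + 1) * real (num_descents xs) ^ k
          + (real n - real (num_descents xs)) * (real (num_descents xs) + 1) ^ k"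
      by (simp add: of_nat_diff add.commute)
  qed
  also have "\<dots> = moment_step (descent_moment n) k (real n)"
    unfolding descent_moment_def[abs_def] by (rule sum_moment_step)
  finally show ?thesis .
qed

definition E_egf :: "nat \<Rightarrow> real fps" where
  "E_egf d = expm1_div ^ (d + 2) * fps_exp (-1)"

lemma E_eq_E_egf_nth: "E k d = fact k * fps_nth (E_egf d) k"
  by (simp add: E_def E_egf_def)

lemma fps_X_mult_expm1_div: "fps_X * expm1_div = fps_exp 1 - 1"
proof (rule fps_ext)
  fix n
  show "fps_nth (fps_X * expm1_div) n = fps_nth (fps_exp 1 - 1) n"
    by (cases n) (simp_all add: expm1_div_def algebra_simps)
qed

lemma fps_X_mult_deriv_expm1_div: "fps_X * fps_deriv expm1_div = fps_exp 1 - expm1_div"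
proof (rule fps_ext)
  fix n
  show "fps_nth (fps_X * fps_deriv expm1_div) n = fps_nth (fps_exp 1 - expm1_div) n"
  proof (cases n)
    case (Suc m)
    have "(1 + real m) / ((real m + 2) * F) = 1 / F - 1 / ((real m + 2) * F)" if "F > 0" for F :: real
      using that by (simp add: divide_simps)
    moreover have "fact (Suc (Suc m)) = (real m + 2) * (fact (Suc m) :: real)"
      by simp
    ultimately show ?thesis
      using Suc by (simp add: expm1_div_def del: fact_Suc)
  qed (simp add: expm1_div_def)
qed

lemma E_egf_Suc:
  "of_nat (d + 2) * E_egf (Suc d) =
     E_egf d + of_nat (d + 1) * E_egf d * fps_exp 1 + fps_deriv (E_egf d) * (1 - fps_exp 1)"
proof -
  define g P e ei where "g = expm1_div" and "P = g ^ (d + 1)"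
    and "e = fps_exp (1::real)" and "ei = fps_exp (-1::real)"
  have Xg: "fps_X * g = e - 1" and Xg': "fps_X * fps_deriv g = e - g"
    by (simp_all add: g_def e_def fps_X_mult_expm1_div fps_X_mult_deriv_expm1_div)
  have e_ei: "e * ei = 1"
    by (simp add: e_def ei_def flip: fps_exp_add_mult)
  have E_egf_d: "E_egf d = P * g * ei" and E_egf_Suc_d: "E_egf (Suc d) = P * g * g * ei"
    by (simp_all add: E_egf_def P_def g_def ei_def algebra_simps)
  have "fps_deriv (g ^ (d + 2)) = of_nat (d + 2) * P * fps_deriv g"
    unfolding fps_deriv_power' P_def by (simp add: mult_ac)
  moreover have "fps_deriv ei = - ei"
    by (simp add: ei_def fps_const_neg[symmetric] del: fps_const_neg)
  ultimately have "fps_deriv (E_egf d) = (of_nat d + 2) * P * fps_deriv g * ei - P * g * ei"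
    by (simp add: E_egf_def P_def flip: g_def ei_def)
  with Xg Xg' e_ei have "fps_X * ((of_nat d + 2) * E_egf (Suc d)) =
      fps_X * (E_egf d + (of_nat d + 1) * E_egf d * e + fps_deriv (E_egf d) * (1 - e))"
    unfolding E_egf_d E_egf_Suc_d by algebra
  then show ?thesis
    by (simp add: e_def add.commute)
qed

lemma fact_fps_mult_nth:
  fixes A B :: "'a::field_char_0 fps"
  shows "fact k * fps_nth (A * B) k =
    (\<Sum>i=0..k. of_nat (k choose i) * (fact i * fps_nth A i) * (fact (k - i) * fps_nth B (k - i)))"
proof -
  have "fact k * fps_nth (A * B) k = (\<Sum>i=0..k. fact k * (fps_nth A i * fps_nth B (k - i)))"
    by (simp add: fps_mult_nth sum_distrib_left)
  also have "\<dots> =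
      (\<Sum>i=0..k. of_nat (k choose i) * (fact i * fps_nth A i) * (fact (k - i) * fps_nth B (k - i)))"
    by (intro sum.cong refl) (simp add: binomial_fact)
  finally show ?thesis .
qed

lemma fact_fps_mult_exp_nth:
  fixes A :: "'a::field_char_0 fps"
  shows "fact k * fps_nth (A * fps_exp c) k =
    (\<Sum>i=0..k. of_nat (k choose i) * (fact i * fps_nth A i) * c ^ (k - i))"
  by (simp add: fact_fps_mult_nth)

lemma fact_fps_deriv_nth:
  fixes A :: "'a::{comm_semiring_1, semiring_char_0} fps"
  shows "fact k * fps_nth (fps_deriv A) k = fact (Suc k) * fps_nth A (Suc k)"
  by (simp add: algebra_simps)

lemma E_Suc: "real (d + 2) * E k (Suc d) = moment_step (\<lambda>j. E j d) k (real (Suc d))"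
proof -
  have "real (d + 2) * E k (Suc d) = fact k * fps_nth (of_nat (d + 2) * E_egf (Suc d)) k"
    by (simp add: E_eq_E_egf_nth fps_of_nat[symmetric] del: fps_of_nat)
  also have "\<dots> = fact k * fps_nth (E_egf d + fps_const (real (d + 1)) * (E_egf d * fps_exp 1)
      + fps_deriv (E_egf d) - fps_deriv (E_egf d) * fps_exp 1) k"
    unfolding E_egf_Suc unfolding fps_of_nat[symmetric]
    by (simp only: mult.assoc right_diff_distrib mult_1_right add_diff_eq)
  also have "\<dots> = fact k * fps_nth (E_egf d) k
      + real (d + 1) * (fact k * fps_nth (E_egf d * fps_exp 1) k)
      + fact k * fps_nth (fps_deriv (E_egf d)) k
      - fact k * fps_nth (fps_deriv (E_egf d) * fps_exp 1) k"
    by (simp only: fps_add_nth fps_sub_nth fps_mult_left_const_nth) (simp add: algebra_simps)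
  also have "\<dots> = E k d + real (Suc d) * (\<Sum>i=0..k. of_nat (k choose i) * E i d)
      + E (Suc k) d - (\<Sum>i=0..k. of_nat (k choose i) * E (Suc i) d)"
    unfolding fact_fps_mult_exp_nth fact_fps_deriv_nth by (simp add: E_eq_E_egf_nth)
  also have "\<dots> = moment_step (\<lambda>j. E j d) k (real (Suc d))"
    by (simp add: moment_step_def)
  finally show ?thesis .
qed

lemma E_0_0: "E 0 0 = 1" and E_1_0: "E 1 0 = 0"
  by (simp_all add: E_def expm1_div_def fps_mult_nth power2_eq_square numeral_2_eq_2)

lemma descent_moment_eq_E: "k \<le> Suc d \<Longrightarrow> descent_moment (Suc d) k = fact (Suc d) * E k d"
proof (induction d arbitrary: k)
  case 0
  have "descent_moment 1 k = 0 ^ k"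
    by (simp add: descent_moment_def)
  with "0.prems" show ?case
    using E_0_0 E_1_0 by (cases k) auto
next
  case (Suc d)
  \<comment> \<open>For k = d + 2 the k-th moments need not agree yet, but their coefficient 1 + c - k vanishes.\<close>
  have "descent_moment (Suc (Suc d)) k = moment_step (descent_moment (Suc d)) k (real (Suc d))"
    by (rule descent_moment_Suc)
  also have "\<dots> = moment_step (\<lambda>j. fact (Suc d) * E j d) k (real (Suc d))"
  proof (rule moment_step_cong)
    show "\<forall>i<k. descent_moment (Suc d) i = fact (Suc d) * E i d"
      using Suc by simp
    show "descent_moment (Suc d) k = fact (Suc d) * E k d \<or> real (Suc d) = of_nat k - 1"
      using Suc by (cases "k \<le> Suc d") auto
  qed
  also have "\<dots> = fact (Suc d) * (real (d + 2) * E k (Suc d))"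
    by (simp only: moment_step_scale E_Suc)
  also have "\<dots> = fact (Suc (Suc d)) * E k (Suc d)"
    by simp
  finally show ?case .
qed

lemma E'_eq_expectation:
  assumes "k \<le> Suc d"
  shows "E' k d = measure_pmf.expectation (unif_perm (Suc d))
    (\<lambda>\<sigma>. (real (descents (Suc d) \<sigma>) - real d / 2) ^ k)"
proof -
  have "fact (Suc d) * E' k d =
      (\<Sum>i=0..k. real (k choose i) * descent_moment (Suc d) i * (- real d / 2) ^ (k - i))"
    using assms by (simp add: E'_def descent_moment_eq_E sum_distrib_left algebra_simps)
  also have "\<dots> = (\<Sum>xs\<in>permutations_of_set {1..Suc d}.
      \<Sum>i=0..k. real (k choose i) * real (num_descents xs) ^ i * (- real d / 2) ^ (k - i))"
    by (simp add: descent_moment_def sum_distrib_left sum_distrib_right sum.swap[of _ "{0..k}"]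
        algebra_simps)
  also have "\<dots> =
      (\<Sum>xs\<in>permutations_of_set {1..Suc d}. (real (num_descents xs) + (- real d / 2)) ^ k)"
    by (simp only: binomial_ring atLeast0AtMost)
  also have "\<dots> = fact (Suc d) * measure_pmf.expectation (unif_perm (Suc d))
      (\<lambda>\<sigma>. (real (descents (Suc d) \<sigma>) - real d / 2) ^ k)"
    by (simp add: expectation_unif_perm_descents[of _ "\<lambda>j. (real j - real d / 2) ^ k"] del: fact_Suc)
  finally show ?thesis
    by simp
qed

definition sinh_half_div :: "real fps" where
  "sinh_half_div = Abs_fps (\<lambda>n. if even n then 1 / (4 ^ (n div 2) * fact (n + 1)) else 0)"

lemma fps_X_mult_sinh_half_div: "fps_X * sinh_half_div = fps_exp (1 / 2) - fps_exp (- 1 / 2)"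
proof (rule fps_ext)
  fix n
  show "fps_nth (fps_X * sinh_half_div) n = fps_nth (fps_exp (1 / 2) - fps_exp (- 1 / 2)) n"
  proof (cases n)
    case (Suc m)
    show ?thesis
    proof (cases "even m")
      case True
      then have "(4::real) ^ (m div 2) = 2 ^ m"
        by (auto simp: power_mult simp flip: power_mult_distrib)
      with True Suc show ?thesis
        by (simp add: sinh_half_div_def power_divide field_simps del: fact_Suc)
    qed (simp add: Suc sinh_half_div_def power_divide)
  qed (simp add: sinh_half_div_def)
qed

lemma expm1_div_mult_exp_neg_half: "expm1_div * fps_exp (- 1 / 2) = sinh_half_div"
proof -
  have "fps_X * (expm1_div * fps_exp (- 1 / 2)) = (fps_exp 1 - 1) * fps_exp (- 1 / 2 :: real)"
    by (simp add: fps_X_mult_expm1_div flip: mult.assoc)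
  also have "\<dots> = fps_X * sinh_half_div"
    by (simp add: fps_X_mult_sinh_half_div algebra_simps flip: fps_exp_add_mult)
  finally show ?thesis
    by simp
qed

lemma E_egf_mult_exp: "E_egf d * fps_exp (- real d / 2) = sinh_half_div ^ (d + 2)"
proof -
  have "fps_exp (-1) * fps_exp (- real d / 2) = fps_exp (- 1 / 2) ^ (d + 2)"
    by (simp add: fps_exp_power_mult field_simps flip: fps_exp_add_mult)
  then have "E_egf d * fps_exp (- real d / 2) = expm1_div ^ (d + 2) * fps_exp (- 1 / 2) ^ (d + 2)"
    by (simp add: E_egf_def mult.assoc)
  also have "\<dots> = sinh_half_div ^ (d + 2)"
    by (simp only: expm1_div_mult_exp_neg_half flip: power_mult_distrib)
  finally show ?thesis .
qed

lemma egf_E': "Abs_fps (\<lambda>k. E' k d / fact k) = sinh_half_div ^ (d + 2)"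
proof (rule fps_ext)
  fix k
  have "E' k d = fact k * fps_nth (E_egf d * fps_exp (- real d / 2)) k"
    unfolding fact_fps_mult_exp_nth E'_def E_eq_E_egf_nth by simp
  then show "fps_nth (Abs_fps (\<lambda>k. E' k d / fact k)) k = fps_nth (sinh_half_div ^ (d + 2)) k"
    unfolding E_egf_mult_exp by simp
qed

lemma E'_add_convolution:
  "E' k (a + b + 2) = (\<Sum>i=0..k. real (k choose i) * E' i a * E' (k - i) b)"
proof -
  have E'_eq: "E' k d = fact k * fps_nth (sinh_half_div ^ (d + 2)) k" for k d
    using fps_nth_Abs_fps[of "\<lambda>k. E' k d / fact k" k] by (simp add: egf_E')
  have "sinh_half_div ^ (a + b + 2 + 2) = sinh_half_div ^ (a + 2) * sinh_half_div ^ (b + 2)"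
    by (simp flip: power_add)
  then show ?thesis
    by (simp only: E'_eq fact_fps_mult_nth)
qed

theorem corollary3p13:
  shows "(\<forall>a b k. E' k (a + b + 2) =
            (\<Sum>i=0..k. real (k choose i) * E' i a * E' (k - i) b))
       \<and> (\<forall>d. Abs_fps (\<lambda>k. E' k d / fact k) =
            (Abs_fps (\<lambda>n. if even n then 1 / (4 ^ (n div 2) * fact (n + 1)) else 0)) ^ (d + 2))
       \<and> (\<forall>d k. k \<le> d + 1 \<longrightarrow>
            E' k d = measure_pmf.expectation (unif_perm (d + 1))
                       (\<lambda>\<sigma>. (real (descents (d + 1) \<sigma>) - real d / 2) ^ k))"
  using E'_add_convolution egf_E' E'_eq_expectation by (simp add: sinh_half_div_def)

end
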